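(* Let $\ell\ge 2$, let $\mathcal F\subset\binom{[n]}{\ell}$ be an intersecting family, and let $x\in\bigcup_{F\in\mathcal F}F$. Then $|\mathcal F(x)|\geq \gamma_{\ell-1}(\mathcal F)+1$, with equality only if $\mathcal F(x)$ consists of $\gamma_{\ell-1}(\mathcal F)+1$ pairwise disjoint $(\ell-1)$-sets.
   Context: A family is intersecting if any two members intersect. $\mathcal F(x)=\{F\setminus\{x\}: x\in F\in\mathcal F\}$. For $S\subset[n]$, $\mathcal F(\overline S)=\{F\in\mathcal F: F\cap S=\emptyset\}$, and $\gamma_{\ell-1}(\mathcal F)=\min_{S\in\binom{[n]}{\ell-1}}|\mathcal F(\overline S)|$. *)

theory Defs
  imports Main
begin

definition intersecting :: "'a set set \<Rightarrow> bool" where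
  "intersecting \<F> \<longleftrightarrow> (\<forall>F\<in>\<F>. \<forall>G\<in>\<F>. F \<inter> G \<noteq> {})"

definition link :: "'a set set \<Rightarrow> 'a \<Rightarrow> 'a set set" where
  "link \<F> x = {F - {x} | F. F \<in> \<F> \<and> x \<in> F}"

definition avoid :: "'a set set \<Rightarrow> 'a set \<Rightarrow> 'a set set" where
  "avoid \<F> S = {F \<in> \<F>. F \<inter> S = {}}"

definition gamma :: "nat \<Rightarrow> nat \<Rightarrow> nat set set \<Rightarrow> nat" where
  "gamma n k \<F> = Min ((\<lambda>S. card (avoid \<F> S)) ` {S. S \<subseteq> {1..n} \<and> card S = k})"

end

theory Submission
  imports Defs
begin

text \<open>
  Fix \<open>A \<in> \<F>(x)\<close>. Every member of \<open>\<F>\<close> avoiding the \<open>(\<ell>-1)\<close>-set \<open>A\<close> must still meet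
  \<open>A \<union> {x}\<close>, hence contains \<open>x\<close>; deleting \<open>x\<close> maps these members injectively into the
  members of \<open>\<F>(x)\<close> disjoint from \<open>A\<close>. So \<open>\<gamma>\<^sub>\<ell>\<^sub>-\<^sub>1(\<F>)\<close> is at most the number of members of
  \<open>\<F>(x)\<close> other than \<open>A\<close>, and equality forces every other member to be disjoint from \<open>A\<close>.
\<close>

lemma finite_link: "finite \<F> \<Longrightarrow> finite (link \<F> x)"
proof -
  assume "finite \<F>"
  moreover have "link \<F> x \<subseteq> (\<lambda>F. F - {x}) ` \<F>"
    unfolding link_def by auto
  ultimately show ?thesis
    using finite_subset by blast
qed

lemma card_link_member:
  assumes "\<forall>F\<in>\<F>. finite F \<and> card F = l" and "A \<in> link \<F> x"
  shows "card A = l - 1"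
  using assms unfolding link_def by auto

lemma avoid_link_member_subset:
  assumes "intersecting \<F>" and "A \<in> link \<F> x"
  shows "avoid \<F> A \<subseteq> insert x ` {B \<in> link \<F> x. B \<inter> A = {}}"
proof
  fix F assume "F \<in> avoid \<F> A"
  then have F: "F \<in> \<F>" "F \<inter> A = {}"
    unfolding avoid_def by auto
  obtain F' where F': "F' \<in> \<F>" "x \<in> F'" "A = F' - {x}"
    using assms(2) unfolding link_def by auto
  have "F \<inter> F' \<noteq> {}"
    using assms(1) F(1) F'(1) unfolding intersecting_def by blast
  then have "x \<in> F"
    using F(2) F' by auto
  then have "F - {x} \<in> {B \<in> link \<F> x. B \<inter> A = {}}" and "F = insert x (F - {x})"
    using F unfolding link_def by auto
  then show "F \<in> insert x ` {B \<in> link \<F> x. B \<inter> A = {}}"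
    by blast
qed

lemma card_avoid_link_member_le:
  assumes "finite \<F>" and "intersecting \<F>" and "A \<in> link \<F> x"
  shows "card (avoid \<F> A) \<le> card {B \<in> link \<F> x. B \<inter> A = {}}"
proof -
  have fin: "finite {B \<in> link \<F> x. B \<inter> A = {}}"
    using finite_link[OF assms(1)] by simp
  have "card (avoid \<F> A) \<le> card (insert x ` {B \<in> link \<F> x. B \<inter> A = {}})"
    using avoid_link_member_subset[OF assms(2,3)] fin by (intro card_mono) auto
  also have "\<dots> \<le> card {B \<in> link \<F> x. B \<inter> A = {}}"
    by (rule card_image_le[OF fin])
  finally show ?thesis .
qed

lemma gamma_le_card_avoid:
  assumes "S \<subseteq> {1..n}" and "card S = k"
  shows "gamma n k \<F> \<le> card (avoid \<F> S)"
  unfolding gamma_def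
proof (rule Min_le)
  have "{S. S \<subseteq> {1..n} \<and> card S = k} \<subseteq> Pow {1..n}"
    by blast
  then have "finite {S. S \<subseteq> {1..n} \<and> card S = k}"
    by (rule finite_subset) simp
  then show "finite ((\<lambda>S. card (avoid \<F> S)) ` {S. S \<subseteq> {1..n} \<and> card S = k})"
    by (rule finite_imageI)
  show "card (avoid \<F> S) \<in> (\<lambda>S. card (avoid \<F> S)) ` {S. S \<subseteq> {1..n} \<and> card S = k}"
    using assms by blast
qed

lemma disjoint_link_members_psubset:
  assumes "A \<in> link \<F> x" and "A \<noteq> {}"
  shows "{B \<in> link \<F> x. B \<inter> A = {}} \<subset> link \<F> x"
  using assms by blast

lemma gamma_le_card_disjoint_link_members:
  assumes fam: "\<forall>F\<in>\<F>. F \<subseteq> {1..n} \<and> card F = l"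
    and "intersecting \<F>" and A: "A \<in> link \<F> x"
  shows "gamma n (l - 1) \<F> \<le> card {B \<in> link \<F> x. B \<inter> A = {}}"
proof -
  have "\<F> \<subseteq> Pow {1..n}"
    using fam by blast
  then have "finite \<F>"
    by (rule finite_subset) simp
  have "A \<subseteq> {1..n}"
    using A fam unfolding link_def by auto
  moreover have "\<forall>F\<in>\<F>. finite F \<and> card F = l"
    using fam finite_subset[OF _ finite_atLeastAtMost] by blast
  then have "card A = l - 1"
    using A by (rule card_link_member)
  ultimately have "gamma n (l - 1) \<F> \<le> card (avoid \<F> A)"
    by (rule gamma_le_card_avoid)
  also have "\<dots> \<le> card {B \<in> link \<F> x. B \<inter> A = {}}"
    by (rule card_avoid_link_member_le) fact+
  finally show ?thesis .
qed

theorem fact4p6: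
  fixes n l :: nat and \<F> :: "nat set set" and x :: nat
  assumes "l \<ge> 2"
    and "\<forall>F\<in>\<F>. F \<subseteq> {1..n} \<and> card F = l"
    and "intersecting \<F>"
    and "x \<in> \<Union>\<F>"
  shows "card (link \<F> x) \<ge> gamma n (l - 1) \<F> + 1 \<and>
         (card (link \<F> x) = gamma n (l - 1) \<F> + 1 \<longrightarrow>
           (\<forall>A\<in>link \<F> x. card A = l - 1) \<and>
           (\<forall>A\<in>link \<F> x. \<forall>B\<in>link \<F> x. A \<noteq> B \<longrightarrow> A \<inter> B = {}))"
proof -
  have uniform: "\<forall>F\<in>\<F>. finite F \<and> card F = l"
    using assms(2) finite_subset[OF _ finite_atLeastAtMost] by blast
  have "\<F> \<subseteq> Pow {1..n}"
    using assms(2) by blast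
  then have "finite \<F>"
    by (rule finite_subset) simp
  then have fin: "finite (link \<F> x)"
    by (rule finite_link)
  let ?D = "\<lambda>A. {B \<in> link \<F> x. B \<inter> A = {}}"
  note gamma_le = gamma_le_card_disjoint_link_members[OF assms(2,3)]
  have D_less: "card (?D A) < card (link \<F> x)" if A: "A \<in> link \<F> x" for A
  proof (rule psubset_card_mono[OF fin disjoint_link_members_psubset[OF A]])
    show "A \<noteq> {}"
      using card_link_member[OF uniform A] assms(1) by auto
  qed
  obtain A0 where "A0 \<in> link \<F> x"
    using assms(4) unfolding link_def by auto
  show ?thesis
  proof (intro conjI impI ballI)
    show "gamma n (l - 1) \<F> + 1 \<le> card (link \<F> x)"
      using gamma_le[OF \<open>A0 \<in> link \<F> x\<close>] D_less[OF \<open>A0 \<in> link \<F> x\<close>] by linarith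
    show "card A = l - 1" if "A \<in> link \<F> x" for A
      by (rule card_link_member[OF uniform that])
    fix A B
    assume eq: "card (link \<F> x) = gamma n (l - 1) \<F> + 1"
      and A: "A \<in> link \<F> x" and "B \<in> link \<F> x" "A \<noteq> B"
    have "?D A = link \<F> x - {A}"
    proof (rule card_seteq)
      show "finite (link \<F> x - {A})"
        using fin by blast
      show "?D A \<subseteq> link \<F> x - {A}"
        using D_less[OF A] A by auto
      show "card (link \<F> x - {A}) \<le> card (?D A)"
        using gamma_le[OF A] eq A fin by simp
    qed
    then show "A \<inter> B = {}"
      using \<open>B \<in> link \<F> x\<close> \<open>A \<noteq> B\<close> by blast
  qed
qed

end
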